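(* Let $(p^\ast,q^\ast,\mathcal{M}^\ast)$ be an optimal solution of Problem 1, and let $(p_3^\ast,q_3^\ast)$ be an optimal solution of Problem 3 (i.e. $q_3^\ast=\alpha p_3^\ast$ and $p_3^\ast$ maximizes $p\mapsto R(p,\alpha p,\hat{\mathcal{M}}^\ast(p,\alpha p))$ over $p\in[0,1]$ with $\alpha p\in[0,1]$), both assumed to exist. Then $$R(p_3^\ast,q_3^\ast,\hat{\mathcal{M}}^\ast(p_3^\ast,q_3^\ast))\ \ge\ \Big(1-\frac1e\Big)R(p^\ast,q^\ast,\mathcal{M}^\ast).$$
   Context: Let $\mathcal{G}=(\mathcal{U},\mathcal{E})$ be a finite directed graph without self-loops, $\mathcal{U}=\{1,\dots,U\}$. For $u,v\in\mathcal{U}$, $D(u,v;\mathcal{G})$ denotes the number of edges of a shortest directed path from $u$ to $v$ in $\mathcal{G}$, with $D(u,v;\mathcal{G})=+\infty$ if there is no such path. For an integer $d\ge0$, the $d$-visible set of $u$ is $\mathcal{V}(u,d;\mathcal{G})=\{v\in\mathcal{U}: D(v,u;\mathcal{G})\le d\}$. Fix an integer social visibility threshold $\tau\ge1$. Let $\mathcal{R}\subseteq\mathcal{U}$ (requesters) and $\mathcal{S}\subseteq\mathcal{U}$ (suppliers) be disjoint. Each requester $u\in\mathcal{R}$ has a valuation $p_u\in[0,1]$ and each supplier $u\in\mathcal{S}$ has a valuation $q_u\in[0,1]$. Let $b$ be a positive integer (budget) and $\alpha\in(0,1)$. For $p\in[0,1]$ let $\widetilde{R}(p)=\{u\in\mathcal{R}: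 p_u\ge p\}$ and for $q\in[0,1]$ let $\widetilde{S}(q)=\{u\in\mathcal{S}: q_u\le q\}$. For $\mathcal{M}\subseteq\mathcal{S}$ let $\widetilde{G}(p,\mathcal{M})$ be the graph obtained from $\mathcal{G}$ by adding a directed edge from every $s\in\mathcal{M}$ to every $r\in\widetilde{R}(p)$. For $u\in\widetilde{R}(p)$ let $I_u(p,\mathcal{M})=|\mathcal{V}(u,\tau;\widetilde{G}(p,\mathcal{M}))\setminus\mathcal{V}(u,\tau;\mathcal{G})|$, and $I(p,\mathcal{M})=\sum_{u\in\widetilde{R}(p)}I_u(p,\mathcal{M})$. The revenue is $R(p,q,\mathcal{M})=p\,I(p,\mathcal{M})-q\,I(p,\mathcal{M})$. Problem 1: maximize $R(p,q,\mathcal{M})$ over $p,q\in[0,1]$ and $\mathcal{M}$ subject to $q=\alpha p$, $\mathcal{M}\subseteq\widetilde{S}(q)$, $|\mathcal{M}|\le b$. The greedy procedure \texttt{OptSupplierSet}$(p,q)$: start with $\mathcal{M}=\emptyset$; for $t=1,\dots,b$, pick $u^\ast\in\widetilde{S}(q)$ maximizing $R(p,q,\mathcal{M}\cup\{u\})-R(p,q,\mathcal{M})$ (ties broken arbitrarily) and set $\mathcal{M}\leftarrow\mathcal{M}\cup\{u^\ast\}$; output $\hat{\mathcal{M}}^\ast(p,q)=\mathcal{M}$. Problem 3: maximize $R(p,q,\hat{\mathcal{M}}^\ast(p,q))$ over $p,q\in[0,1]$ with $q=\alpha p$. *)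

theory Defs
  imports Complex_Main "HOL-Library.Extended_Nat"
begin

text \<open>Directed graph on the vertex set {1..U} given by its edge set E (pairs (a,b) = edge a to b).
  Walks of length k are encoded by the k-th relational power E ^^ k.\<close>

definition dist :: "(nat \<times> nat) set \<Rightarrow> nat \<Rightarrow> nat \<Rightarrow> enat" where
  "dist E u v = (if \<exists>k. (u, v) \<in> E ^^ k then enat (LEAST k. (u, v) \<in> E ^^ k) else \<infinity>)"

definition visible :: "nat \<Rightarrow> (nat \<times> nat) set \<Rightarrow> nat \<Rightarrow> nat \<Rightarrow> nat set" where
  "visible NU E u d = {v \<in> {1..NU}. dist E v u \<le> enat d}"

definition Rtil :: "nat set \<Rightarrow> (nat \<Rightarrow> real) \<Rightarrow> real \<Rightarrow> nat set" where
  "Rtil Req pv p = {u \<in> Req. pv u \<ge> p}"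

definition Stil :: "nat set \<Rightarrow> (nat \<Rightarrow> real) \<Rightarrow> real \<Rightarrow> nat set" where
  "Stil Supp qv q = {u \<in> Supp. qv u \<le> q}"

definition aug_graph :: "(nat \<times> nat) set \<Rightarrow> nat set \<Rightarrow> (nat \<Rightarrow> real) \<Rightarrow> real \<Rightarrow> nat set
    \<Rightarrow> (nat \<times> nat) set" where
  "aug_graph E Req pv p M = E \<union> (M \<times> Rtil Req pv p)"

definition infl :: "nat \<Rightarrow> (nat \<times> nat) set \<Rightarrow> nat \<Rightarrow> nat set \<Rightarrow> (nat \<Rightarrow> real) \<Rightarrow> real
    \<Rightarrow> nat set \<Rightarrow> real" where
  "infl NU E \<tau> Req pv p M =
     (\<Sum>u\<in>Rtil Req pv p. real (card (visible NU (aug_graph E Req pv p M) u \<tau> - visible NU E u \<tau>)))"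

definition revenue :: "nat \<Rightarrow> (nat \<times> nat) set \<Rightarrow> nat \<Rightarrow> nat set \<Rightarrow> (nat \<Rightarrow> real)
    \<Rightarrow> real \<Rightarrow> real \<Rightarrow> nat set \<Rightarrow> real" where
  "revenue NU E \<tau> Req pv p q M = p * infl NU E \<tau> Req pv p M - q * infl NU E \<tau> Req pv p M"

text \<open>M is a possible output of the greedy procedure OptSupplierSet(p,q) (for some tie-breaking).
  If the candidate set is empty, nothing can be picked and M stays unchanged.\<close>
definition greedy_output :: "nat \<Rightarrow> (nat \<times> nat) set \<Rightarrow> nat \<Rightarrow> nat set \<Rightarrow> nat set
    \<Rightarrow> (nat \<Rightarrow> real) \<Rightarrow> (nat \<Rightarrow> real) \<Rightarrow> nat \<Rightarrow> real \<Rightarrow> real \<Rightarrow> nat set \<Rightarrow> bool" where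
  "greedy_output NU E \<tau> Req Supp pv qv b p q M \<longleftrightarrow>
     (\<exists>Ms :: nat \<Rightarrow> nat set. Ms 0 = {} \<and> M = Ms b \<and>
        (\<forall>t<b. (Stil Supp qv q = {} \<longrightarrow> Ms (Suc t) = Ms t) \<and>
               (Stil Supp qv q \<noteq> {} \<longrightarrow>
                  (\<exists>u\<in>Stil Supp qv q. Ms (Suc t) = Ms t \<union> {u} \<and>
                     (\<forall>w\<in>Stil Supp qv q.
                        revenue NU E \<tau> Req pv p q (Ms t \<union> {w}) - revenue NU E \<tau> Req pv p q (Ms t)
                        \<le> revenue NU E \<tau> Req pv p q (Ms t \<union> {u}) - revenue NU E \<tau> Req pv p q (Ms t))))))"

end

theory Submission
  imports Defs
begin

text \<open>For fixed prices p and q = \<alpha> p, the viewers a requester u gains from a supplier set M are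
  the union, over s \<in> M, of the viewers whose new short walk to u leaves through an added edge
  out of s. Hence the influence is a sum of coverage functions of M and the revenue is the
  nonnegative multiple p - q of a monotone submodular function, for which the greedy procedure
  is a (1 - 1/e)-approximation (Nemhauser, Wolsey and Fisher). At the prices of an optimal
  solution of Problem 1 the greedy set thus earns at least (1 - 1/e) times the optimum, and
  Problem 3, which optimizes over all prices with greedy supplier sets, earns at least that.\<close>

lemma dist_le_enat_iff: "dist E v u \<le> enat d \<longleftrightarrow> (\<exists>k\<le>d. (v, u) \<in> E ^^ k)"
proof (cases "\<exists>k. (v, u) \<in> E ^^ k")
  case True
  then have "(v, u) \<in> E ^^ (LEAST k. (v, u) \<in> E ^^ k)" by (rule LeastI_ex)
  with True show ?thesis
    by (auto simp: dist_def intro: Least_le order_trans)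
next
  case False
  then show ?thesis by (simp add: dist_def)
qed

lemma relpow_mono: "(A :: ('a \<times> 'a) set) \<subseteq> B \<Longrightarrow> A ^^ k \<subseteq> B ^^ k"
  by (induction k) (simp_all add: relcomp_mono)

text \<open>A walk in E \<union> M \<times> R either avoids the new edges or can be cut at its first and its
  last new edge into an E-walk into M and an E-walk out of R.\<close>
lemma relpow_Un_times_cases:
  fixes E :: "('a \<times> 'a) set"
  assumes "(v, u) \<in> (E \<union> M \<times> R) ^^ k"
  shows "(v, u) \<in> E ^^ k \<or>
    (\<exists>s\<in>M. \<exists>r\<in>R. \<exists>i j. i + 1 + j \<le> k \<and> (v, s) \<in> E ^^ i \<and> (r, u) \<in> E ^^ j)"
  using assms
proof (induction k arbitrary: u)
  case 0
  then show ?case by simp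
next
  case (Suc k)
  then obtain w where walk: "(v, w) \<in> (E \<union> M \<times> R) ^^ k" and edge: "(w, u) \<in> E \<union> M \<times> R"
    by (auto elim: relpow_Suc_E)
  have u_refl: "(u, u) \<in> E ^^ 0" by simp
  show ?case
  proof (cases "(w, u) \<in> E")
    case True
    from Suc.IH[OF walk] show ?thesis
    proof
      assume "(v, w) \<in> E ^^ k"
      with True show ?thesis by (blast intro: relpow_Suc_I)
    next
      assume "\<exists>s\<in>M. \<exists>r\<in>R. \<exists>i j. i + 1 + j \<le> k \<and> (v, s) \<in> E ^^ i \<and> (r, w) \<in> E ^^ j"
      then obtain s r i j where "s \<in> M" "r \<in> R" "i + 1 + j \<le> k" "(v, s) \<in> E ^^ i" "(r, w) \<in> E ^^ j"
        by blast
      with True show ?thesis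
        by (intro disjI2 bexI exI[of _ i] exI[of _ "Suc j"]) (auto intro: relpow_Suc_I)
    qed
  next
    case False
    with edge have "w \<in> M" "u \<in> R" by auto
    have "\<exists>s\<in>M. \<exists>i\<le>k. (v, s) \<in> E ^^ i"
      using Suc.IH[OF walk]
    proof
      assume "(v, w) \<in> E ^^ k"
      with \<open>w \<in> M\<close> show ?thesis by blast
    next
      assume "\<exists>s\<in>M. \<exists>r\<in>R. \<exists>i j. i + 1 + j \<le> k \<and> (v, s) \<in> E ^^ i \<and> (r, w) \<in> E ^^ j"
      then obtain s i j where "s \<in> M" "i + 1 + j \<le> k" "(v, s) \<in> E ^^ i" by blast
      then show ?thesis by (intro bexI exI[of _ i]) simp_all
    qed
    then obtain s i where "s \<in> M" "i \<le> k" "(v, s) \<in> E ^^ i" by blast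
    with \<open>u \<in> R\<close> u_refl show ?thesis
      by (intro disjI2 bexI exI[of _ i] exI[of _ 0]) auto
  qed
qed

lemma relpow_Un_times_intro:
  fixes E :: "('a \<times> 'a) set"
  assumes "s \<in> M" "r \<in> R" "(v, s) \<in> E ^^ i" "(r, u) \<in> E ^^ j"
  shows "(v, u) \<in> (E \<union> M \<times> R) ^^ (i + 1 + j)"
proof -
  have sub: "E \<subseteq> E \<union> M \<times> R" by blast
  have "(v, r) \<in> (E \<union> M \<times> R) ^^ Suc i"
    using assms(1-3) relpow_mono[OF sub] by (blast intro: relpow_Suc_I)
  moreover have "(r, u) \<in> (E \<union> M \<times> R) ^^ j"
    using assms(4) relpow_mono[OF sub] by blast
  ultimately have "(v, u) \<in> (E \<union> M \<times> R) ^^ (Suc i + j)" by (rule relpow_trans)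
  then show ?thesis by simp
qed

definition bridge_viewers :: "nat \<Rightarrow> (nat \<times> nat) set \<Rightarrow> nat \<Rightarrow> nat set \<Rightarrow> nat \<Rightarrow> nat \<Rightarrow> nat set"
  where "bridge_viewers NU E \<tau> R u s =
    {v \<in> {1..NU}. \<exists>r\<in>R. \<exists>i j. i + 1 + j \<le> \<tau> \<and> (v, s) \<in> E ^^ i \<and> (r, u) \<in> E ^^ j}
      - visible NU E u \<tau>"

lemma bridge_viewers_subset: "bridge_viewers NU E \<tau> R u s \<subseteq> {1..NU}"
  by (auto simp: bridge_viewers_def)

lemma visible_aug_graph_diff:
  "visible NU (aug_graph E Req pv p M) u \<tau> - visible NU E u \<tau>
     = (\<Union>s\<in>M. bridge_viewers NU E \<tau> (Rtil Req pv p) u s)"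
proof (intro set_eqI iffI)
  fix v
  assume v: "v \<in> visible NU (aug_graph E Req pv p M) u \<tau> - visible NU E u \<tau>"
  then obtain k where k: "k \<le> \<tau>" and walk: "(v, u) \<in> (E \<union> M \<times> Rtil Req pv p) ^^ k"
    by (auto simp: visible_def aug_graph_def dist_le_enat_iff)
  have "(v, u) \<notin> E ^^ k" using v k by (auto simp: visible_def dist_le_enat_iff)
  with relpow_Un_times_cases[OF walk] obtain s r i j where
    "s \<in> M" "r \<in> Rtil Req pv p" "i + 1 + j \<le> k" "(v, s) \<in> E ^^ i" "(r, u) \<in> E ^^ j"
    by blast
  moreover from this(3) k have "i + 1 + j \<le> \<tau>" by simp
  ultimately show "v \<in> (\<Union>s\<in>M. bridge_viewers NU E \<tau> (Rtil Req pv p) u s)"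
    using v unfolding bridge_viewers_def visible_def by blast
next
  fix v
  assume "v \<in> (\<Union>s\<in>M. bridge_viewers NU E \<tau> (Rtil Req pv p) u s)"
  then obtain s r i j where "s \<in> M" "r \<in> Rtil Req pv p" "i + 1 + j \<le> \<tau>"
      "(v, s) \<in> E ^^ i" "(r, u) \<in> E ^^ j" "v \<in> {1..NU}" "v \<notin> visible NU E u \<tau>"
    by (auto simp: bridge_viewers_def)
  moreover have "(v, u) \<in> (E \<union> M \<times> Rtil Req pv p) ^^ (i + 1 + j)"
    using relpow_Un_times_intro calculation(1,2,4,5) .
  ultimately show "v \<in> visible NU (aug_graph E Req pv p M) u \<tau> - visible NU E u \<tau>"
    unfolding visible_def aug_graph_def dist_le_enat_iff by blast
qed

definition coverage :: "'u set \<Rightarrow> ('u \<Rightarrow> 's \<Rightarrow> 'v set) \<Rightarrow> 's set \<Rightarrow> real"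
  where "coverage U B X = (\<Sum>u\<in>U. real (card (\<Union>s\<in>X. B u s)))"

lemma infl_eq_coverage:
  "infl NU E \<tau> Req pv p M = coverage (Rtil Req pv p) (bridge_viewers NU E \<tau> (Rtil Req pv p)) M"
  unfolding infl_def coverage_def visible_aug_graph_diff ..

lemma card_Un_gain_eq:
  assumes "finite C" "finite D"
  shows "real (card (C \<union> D)) - real (card C) = real (card (D - C))"
proof -
  have "card (C \<union> (D - C)) = card C + card (D - C)"
    using assms by (intro card_Un_disjoint) auto
  then show ?thesis by simp
qed

lemma card_Un_UN_gain_le:
  assumes "finite C" "finite Z" "\<And>z. z \<in> Z \<Longrightarrow> finite (B z)"
  shows "real (card (C \<union> (\<Union>z\<in>Z. B z))) - real (card C)
    \<le> (\<Sum>z\<in>Z. real (card (C \<union> B z)) - real (card C))"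
proof -
  have "(\<Union>z\<in>Z. B z) - C = (\<Union>z\<in>Z. B z - C)" by blast
  then have "real (card (C \<union> (\<Union>z\<in>Z. B z))) - real (card C) = real (card (\<Union>z\<in>Z. B z - C))"
    using assms by (simp add: card_Un_gain_eq)
  also have "\<dots> \<le> (\<Sum>z\<in>Z. real (card (B z - C)))"
    using card_UN_le[OF assms(2), of "\<lambda>z. B z - C"] by (simp flip: of_nat_sum)
  also have "\<dots> = (\<Sum>z\<in>Z. real (card (C \<union> B z)) - real (card C))"
    using assms by (intro sum.cong) (simp_all add: card_Un_gain_eq)
  finally show ?thesis .
qed

lemma coverage_mono:
  assumes "\<And>u s. B u s \<subseteq> K" "finite K" "X \<subseteq> Y"
  shows "coverage U B X \<le> coverage U B Y"
  unfolding coverage_def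
proof (intro sum_mono)
  fix u
  have "finite (\<Union>s\<in>Y. B u s)" using assms(1,2) by (meson UN_least finite_subset)
  with assms(3) show "real (card (\<Union>s\<in>X. B u s)) \<le> real (card (\<Union>s\<in>Y. B u s))"
    by (simp add: card_mono SUP_subset_mono)
qed

lemma coverage_gain_le_sum_gains:
  assumes "\<And>u s. B u s \<subseteq> K" "finite K" "finite Z"
  shows "coverage U B (X \<union> Z) - coverage U B X
    \<le> (\<Sum>z\<in>Z. coverage U B (X \<union> {z}) - coverage U B X)"
proof -
  have fin: "finite (\<Union>s\<in>Y. B u s)" for Y u using assms(1,2) by (meson UN_least finite_subset)
  have finB: "finite (B u s)" for u s using assms(1,2) by (rule finite_subset)
  have insert_eq: "(\<Union>s\<in>X \<union> {z}. B u s) = (\<Union>s\<in>X. B u s) \<union> B u z" for u z by blast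
  have "coverage U B (X \<union> Z) - coverage U B X
      = (\<Sum>u\<in>U. real (card ((\<Union>s\<in>X. B u s) \<union> (\<Union>z\<in>Z. B u z))) - real (card (\<Union>s\<in>X. B u s)))"
    by (simp add: coverage_def sum_subtractf)
  also have "\<dots> \<le> (\<Sum>u\<in>U. \<Sum>z\<in>Z. real (card ((\<Union>s\<in>X. B u s) \<union> B u z)) - real (card (\<Union>s\<in>X. B u s)))"
    using assms(3) fin finB by (intro sum_mono card_Un_UN_gain_le)
  also have "\<dots> = (\<Sum>z\<in>Z. coverage U B (X \<union> {z}) - coverage U B X)"
    by (subst sum.swap) (simp only: coverage_def sum_subtractf insert_eq)
  finally show ?thesis .
qed

lemma one_minus_inverse_power_le: "0 < b \<Longrightarrow> (1 - 1 / real b) ^ b \<le> 1 / exp 1"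
proof -
  assume b: "0 < b"
  have "(1 - 1 / real b) ^ b \<le> exp (- 1 / real b) ^ b"
    using b exp_ge_add_one_self[of "- 1 / real b"] by (intro power_mono) (auto simp: field_simps)
  also have "\<dots> = exp (real b * (- 1 / real b))" by (rule exp_of_nat_mult[symmetric])
  also have "\<dots> = 1 / exp 1" using b by (simp add: exp_minus inverse_eq_divide)
  finally show ?thesis .
qed

text \<open>The gains of the at most b elements of OPT add up to at least f OPT - f X, and the
  greedy gain is the largest of them.\<close>
lemma greedy_step_gap_le:
  fixes f :: "'a set \<Rightarrow> real"
  assumes mono: "\<And>X Y. X \<subseteq> Y \<Longrightarrow> f X \<le> f Y"
    and gain_le: "\<And>X Z. finite Z \<Longrightarrow> f (X \<union> Z) - f X \<le> (\<Sum>z\<in>Z. f (X \<union> {z}) - f X)"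
    and greedy: "\<And>w. w \<in> S \<Longrightarrow> f (X \<union> {w}) - f X \<le> f (X \<union> {u}) - f X"
    and OPT: "OPT \<subseteq> S" "finite OPT" "card OPT \<le> b" and b: "0 < b"
  shows "f OPT - f (X \<union> {u}) \<le> (1 - 1 / real b) * (f OPT - f X)"
proof -
  define g where "g = f (X \<union> {u}) - f X"
  have "g \<ge> 0" unfolding g_def using mono[of X "X \<union> {u}"] by auto
  have "f OPT - f X \<le> f (X \<union> OPT) - f X" using mono[of OPT "X \<union> OPT"] by auto
  also have "\<dots> \<le> (\<Sum>z\<in>OPT. f (X \<union> {z}) - f X)" using gain_le OPT(2) .
  also have "\<dots> \<le> (\<Sum>z\<in>OPT. g)"
    using greedy OPT(1) unfolding g_def by (intro sum_mono) auto
  also have "\<dots> = real (card OPT) * g" by simp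
  also have "\<dots> \<le> real b * g" using \<open>g \<ge> 0\<close> OPT(3) by (intro mult_right_mono) auto
  finally have "(f OPT - f X) / real b \<le> g" using b by (simp add: divide_le_eq mult.commute)
  then show ?thesis unfolding g_def by (simp add: algebra_simps diff_divide_distrib)
qed

lemma greedy_approximation:
  fixes f :: "'a set \<Rightarrow> real" and Ms :: "nat \<Rightarrow> 'a set"
  assumes mono: "\<And>X Y. X \<subseteq> Y \<Longrightarrow> f X \<le> f Y"
    and gain_le: "\<And>X Z. finite Z \<Longrightarrow> f (X \<union> Z) - f X \<le> (\<Sum>z\<in>Z. f (X \<union> {z}) - f X)"
    and f_empty: "f {} = 0" and Ms_0: "Ms 0 = {}"
    and step: "\<And>t. t < b \<Longrightarrow> \<exists>u. Ms (Suc t) = Ms t \<union> {u} \<and>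
                 (\<forall>w\<in>S. f (Ms t \<union> {w}) - f (Ms t) \<le> f (Ms t \<union> {u}) - f (Ms t))"
    and OPT: "OPT \<subseteq> S" "finite OPT" "card OPT \<le> b" and b: "0 < b"
  shows "(1 - 1 / exp 1) * f OPT \<le> f (Ms b)"
proof -
  define c where "c = 1 - 1 / real b"
  have "0 \<le> c" using b by (simp add: c_def field_simps)
  have gap: "f OPT - f (Ms t) \<le> c ^ t * f OPT" if "t \<le> b" for t
    using that
  proof (induction t)
    case 0
    then show ?case using Ms_0 f_empty by simp
  next
    case (Suc t)
    then obtain u where "Ms (Suc t) = Ms t \<union> {u}"
        "\<forall>w\<in>S. f (Ms t \<union> {w}) - f (Ms t) \<le> f (Ms t \<union> {u}) - f (Ms t)"
      using step[of t] Suc.prems by auto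
    then have "f OPT - f (Ms (Suc t)) \<le> c * (f OPT - f (Ms t))"
      unfolding c_def using greedy_step_gap_le[OF mono gain_le _ OPT b] by simp
    also have "\<dots> \<le> c * (c ^ t * f OPT)" using Suc \<open>0 \<le> c\<close> by (intro mult_left_mono) auto
    finally show ?case by simp
  qed
  have "0 \<le> f OPT" using mono[of "{}" OPT] f_empty by simp
  then have "c ^ b * f OPT \<le> 1 / exp 1 * f OPT"
    unfolding c_def using one_minus_inverse_power_le[OF b] by (rule mult_right_mono[rotated])
  with gap[of b] have "f OPT - f (Ms b) \<le> 1 / exp 1 * f OPT" by simp
  then show ?thesis by (simp add: left_diff_distrib)
qed

lemma revenue_eq_coverage:
  "revenue NU E \<tau> Req pv p q M
     = (p - q) * coverage (Rtil Req pv p) (bridge_viewers NU E \<tau> (Rtil Req pv p)) M"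
  by (simp add: revenue_def infl_eq_coverage algebra_simps)

lemma revenue_empty: "revenue NU E \<tau> Req pv p q {} = 0"
  by (simp add: revenue_eq_coverage coverage_def)

lemma revenue_mono:
  "q \<le> p \<Longrightarrow> M \<subseteq> M' \<Longrightarrow> revenue NU E \<tau> Req pv p q M \<le> revenue NU E \<tau> Req pv p q M'"
  unfolding revenue_eq_coverage
  by (intro mult_left_mono coverage_mono[OF bridge_viewers_subset]) simp_all

lemma revenue_gain_le_sum_gains:
  assumes "q \<le> p" "finite Z"
  shows "revenue NU E \<tau> Req pv p q (M \<union> Z) - revenue NU E \<tau> Req pv p q M
    \<le> (\<Sum>z\<in>Z. revenue NU E \<tau> Req pv p q (M \<union> {z}) - revenue NU E \<tau> Req pv p q M)"
proof -
  let ?F = "coverage (Rtil Req pv p) (bridge_viewers NU E \<tau> (Rtil Req pv p))"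
  have "(p - q) * (?F (M \<union> Z) - ?F M) \<le> (p - q) * (\<Sum>z\<in>Z. ?F (M \<union> {z}) - ?F M)"
    using assms by (intro mult_left_mono coverage_gain_le_sum_gains[OF bridge_viewers_subset]) simp_all
  then show ?thesis
    by (simp add: revenue_eq_coverage sum_distrib_left right_diff_distrib)
qed

lemma greedy_output_approximation:
  assumes "q \<le> p" and greedy: "greedy_output NU E \<tau> Req Supp pv qv b p q M"
    and OPT: "OPT \<subseteq> Stil Supp qv q" "finite OPT" "card OPT \<le> b" and b: "0 < b"
  shows "(1 - 1 / exp 1) * revenue NU E \<tau> Req pv p q OPT \<le> revenue NU E \<tau> Req pv p q M"
proof (cases "Stil Supp qv q = {}")
  case True
  with OPT(1) have "OPT = {}" by blast
  then show ?thesis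
    using revenue_mono[OF \<open>q \<le> p\<close>, of "{}" M] by (simp add: revenue_empty)
next
  case False
  let ?f = "revenue NU E \<tau> Req pv p q" and ?S = "Stil Supp qv q"
  obtain Ms where Ms_0: "Ms 0 = {}" and M: "M = Ms b" and steps:
    "\<forall>t<b. (?S = {} \<longrightarrow> Ms (Suc t) = Ms t) \<and>
       (?S \<noteq> {} \<longrightarrow> (\<exists>u\<in>?S. Ms (Suc t) = Ms t \<union> {u} \<and>
          (\<forall>w\<in>?S. ?f (Ms t \<union> {w}) - ?f (Ms t) \<le> ?f (Ms t \<union> {u}) - ?f (Ms t))))"
    using greedy unfolding greedy_output_def by (elim exE conjE) (rule that)
  have step: "\<exists>u. Ms (Suc t) = Ms t \<union> {u} \<and>
      (\<forall>w\<in>?S. ?f (Ms t \<union> {w}) - ?f (Ms t) \<le> ?f (Ms t \<union> {u}) - ?f (Ms t))" if "t < b" for t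
    using steps that False by blast
  have "(1 - 1 / exp 1) * ?f OPT \<le> ?f (Ms b)"
    using revenue_mono[OF \<open>q \<le> p\<close>] revenue_gain_le_sum_gains[OF \<open>q \<le> p\<close>]
      revenue_empty Ms_0 step OPT b
    by (rule greedy_approximation)
  with M show ?thesis by simp
qed

theorem theorem4:
  fixes NU :: nat and E :: "(nat \<times> nat) set" and \<tau> b :: nat
    and Req Supp :: "nat set" and pv qv :: "nat \<Rightarrow> real" and \<alpha> :: real
    and Mhat :: "real \<Rightarrow> real \<Rightarrow> nat set"
    and pst qst p3 q3 :: real and Mst :: "nat set"
  assumes E_sub: "E \<subseteq> {1..NU} \<times> {1..NU}"
    and no_loops: "\<forall>v. (v, v) \<notin> E"
    and tau: "\<tau> \<ge> 1"
    and Req_sub: "Req \<subseteq> {1..NU}" and Sup_sub: "Supp \<subseteq> {1..NU}"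
    and disj: "Req \<inter> Supp = {}"
    and pv_range: "\<forall>u\<in>Req. 0 \<le> pv u \<and> pv u \<le> 1"
    and qv_range: "\<forall>u\<in>Supp. 0 \<le> qv u \<and> qv u \<le> 1"
    and b_pos: "b > 0"
    and alpha: "0 < \<alpha>" "\<alpha> < 1"
    \<comment> \<open>(pst, qst, Mst) is an optimal solution of Problem 1\<close>
    and opt1_feas: "pst \<in> {0..1}" "qst \<in> {0..1}" "qst = \<alpha> * pst"
                   "Mst \<subseteq> Stil Supp qv qst" "card Mst \<le> b"
    and opt1_max: "\<forall>p q M. p \<in> {0..1} \<and> q \<in> {0..1} \<and> q = \<alpha> * p \<and> M \<subseteq> Stil Supp qv q \<and> card M \<le> b
                    \<longrightarrow> revenue NU E \<tau> Req pv p q M \<le> revenue NU E \<tau> Req pv pst qst Mst"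
    \<comment> \<open>Mhat p q is the output of OptSupplierSet(p,q) under some fixed tie-breaking\<close>
    and Mhat_greedy: "\<forall>p q. p \<in> {0..1} \<and> q \<in> {0..1} \<longrightarrow> greedy_output NU E \<tau> Req Supp pv qv b p q (Mhat p q)"
    \<comment> \<open>(p3, q3) is an optimal solution of Problem 3\<close>
    and opt3_feas: "p3 \<in> {0..1}" "q3 \<in> {0..1}" "q3 = \<alpha> * p3"
    and opt3_max: "\<forall>p q. p \<in> {0..1} \<and> q \<in> {0..1} \<and> q = \<alpha> * p
                    \<longrightarrow> revenue NU E \<tau> Req pv p q (Mhat p q) \<le> revenue NU E \<tau> Req pv p3 q3 (Mhat p3 q3)"
  shows "revenue NU E \<tau> Req pv p3 q3 (Mhat p3 q3) \<ge> (1 - 1 / exp 1) * revenue NU E \<tau> Req pv pst qst Mst"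
proof -
  have "qst \<le> pst"
    using opt1_feas(1,3) alpha mult_right_mono[of \<alpha> 1 pst] by auto
  moreover have "finite Mst"
    using opt1_feas(4) Sup_sub by (auto simp: Stil_def intro: finite_subset)
  moreover have "greedy_output NU E \<tau> Req Supp pv qv b pst qst (Mhat pst qst)"
    using Mhat_greedy opt1_feas(1,2) by blast
  ultimately have "(1 - 1 / exp 1) * revenue NU E \<tau> Req pv pst qst Mst
      \<le> revenue NU E \<tau> Req pv pst qst (Mhat pst qst)"
    using greedy_output_approximation opt1_feas(4,5) b_pos by blast
  also have "\<dots> \<le> revenue NU E \<tau> Req pv p3 q3 (Mhat p3 q3)"
    using opt3_max opt1_feas(1-3) by blast
  finally show ?thesis .
qed

end
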